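(* The canonical model $\mathcal{M}_c=(W_c,\leq_c,R_c,V^+_c,V^-_c)$ is a Nelsonian conditional model: $W_c\neq\emptyset$, $\leq_c$ is a preorder, $R_c$ is well defined (independent of the representative formula), and $R_c$ satisfies conditions (c1) and (c2).
   Context: $\mathcal{L}_{\Box\!\!\rightarrow}$ is built from propositional variables with $\wedge,\vee,\to$, strong negation $\sim$, and a binary would-conditional $\Box\!\!\rightarrow$; $\phi\Diamond\!\!\rightarrow\psi$ abbreviates $\sim(\phi\Box\!\!\rightarrow\sim\psi)$. Abbreviations: $\leftrightarrow$ is mutual $\to$; $\phi\Rightarrow\psi:=(\phi\to\psi)\wedge(\sim\psi\to\sim\phi)$; $\phi\Leftrightarrow\psi:=(\phi\Rightarrow\psi)\wedge(\psi\Rightarrow\phi)$. $\mathbb{N}4\mathbb{CK}$: modus ponens; positive intuitionistic schemes; $\sim\sim\phi\leftrightarrow\phi$, $\sim(\phi\wedge\psi)\leftrightarrow(\sim\phi\vee\sim\psi)$, $\sim(\phi\vee\psi)\leftrightarrow(\sim\phi\wedge\sim\psi)$, $\sim(\phi\to\psi)\leftrightarrow(\phi\wedge\sim\psi)$; (A1) $((\phi\Box\!\!\rightarrow\psi)\wedge(\phi\Box\!\!\rightarrow\chi))\Leftrightarrow(\phi\Box\!\!\rightarrow(\psi\wedge\chi))$; (A2) $(\sim(\phi\Box\!\!\rightarrow\psi)\wedge(\phi\Box\!\!\rightarrow\chi))\to\sim(\phi\Box\!\!\rightarrow(\psi\vee\sim\chi))$; (A3) $((\phi\Diamond\!\!\rightarrow\psi)\to(\phi\Box\!\!\rightarrow\chi))\to(\phi\Box\!\!\rightarrow(\psi\to\chi))$;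 (A4) $\phi\Box\!\!\rightarrow(\psi\to\psi)$; rules: from $\phi\Leftrightarrow\psi$ infer $(\phi\Box\!\!\rightarrow\chi)\Leftrightarrow(\psi\Box\!\!\rightarrow\chi)$; from $\phi\leftrightarrow\psi$ infer $(\chi\Box\!\!\rightarrow\phi)\leftrightarrow(\chi\Box\!\!\rightarrow\psi)$; from $\sim\phi\leftrightarrow\sim\psi$ infer $\sim(\chi\Box\!\!\rightarrow\phi)\leftrightarrow\sim(\chi\Box\!\!\rightarrow\psi)$. $\Gamma\vdash\Delta$ means some nonempty finite disjunction of members of $\Delta$ is derivable from $\Gamma$ and theorems by modus ponens. A bi-set $(\Gamma,\Delta)$ is maximal iff $\Gamma\not\vdash\Delta$ and $\Gamma\cup\Delta=\mathcal{L}_{\Box\!\!\rightarrow}$. Canonical model: $W_c$ is the set of maximal bi-sets; $(\Gamma_0,\Delta_0)\leq_c(\Gamma_1,\Delta_1)$ iff $\Gamma_0\subseteq\Gamma_1$; $((\Gamma_0,\Delta_0),(X,Y),(\Gamma_1,\Delta_1))\in R_c$ iff there is $\phi$ with $X=\{(\Gamma,\Delta)\in W_c\mid\phi\in\Gamma\}$, $Y=\{(\Gamma,\Delta)\in W_c\mid\sim\phi\in\Gamma\}$, $\{\psi\mid\phi\Box\!\!\rightarrow\psi\in\Gamma_0\}\subseteq\Gamma_1$, and $\{\sim(\phi\Box\!\!\rightarrow\psi)\mid\sim\psi\in\Gamma_1\}\subseteq\Gamma_0$; $V^+_c(p)=\{(\Gamma,\Delta)\in W_c\mid p\in\Gamma\}$,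 $V^-_c(p)=\{(\Gamma,\Delta)\in W_c\mid\sim p\in\Gamma\}$. A Nelsonian conditional model is $(W,\leq,R,V^+,V^-)$ with $W\neq\emptyset$, $\leq$ a preorder, $V^\pm$ assigning upward-closed sets, $R\subseteq W\times(\mathcal{P}(W)\times\mathcal{P}(W))\times W$ satisfying for all $X,Y$: (c1) $w\leq w'$ and $R_{(X,Y)}(w,v)$ imply $R_{(X,Y)}(w',v')$ for some $v'\geq v$; (c2) $R_{(X,Y)}(w,v)$ and $v\leq v'$ imply $R_{(X,Y)}(w',v')$ for some $w'\geq w$. *)

theory Defs
  imports Main
begin

datatype fm =
    Var nat
  | Conj fm fm
  | Disj fm fm
  | Imp fm fm
  | SNeg fm
  | Cond fm fm       (* would-conditional  phi []-> psi *)

definition Dia :: "fm \<Rightarrow> fm \<Rightarrow> fm" where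
  "Dia a b = SNeg (Cond a (SNeg b))"

definition Iff :: "fm \<Rightarrow> fm \<Rightarrow> fm" where
  "Iff a b = Conj (Imp a b) (Imp b a)"

definition SImp :: "fm \<Rightarrow> fm \<Rightarrow> fm" where
  "SImp a b = Conj (Imp a b) (Imp (SNeg b) (SNeg a))"

definition SIff :: "fm \<Rightarrow> fm \<Rightarrow> fm" where
  "SIff a b = Conj (SImp a b) (SImp b a)"

inductive provable :: "fm \<Rightarrow> bool" where
  K:   "provable (Imp a (Imp b a))"
| S:   "provable (Imp (Imp a (Imp b c)) (Imp (Imp a b) (Imp a c)))"
| CE1: "provable (Imp (Conj a b) a)"
| CE2: "provable (Imp (Conj a b) b)"
| CI:  "provable (Imp a (Imp b (Conj a b)))"
| DI1: "provable (Imp a (Disj a b))"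
| DI2: "provable (Imp b (Disj a b))"
| DE:  "provable (Imp (Imp a c) (Imp (Imp b c) (Imp (Disj a b) c)))"
| N1:  "provable (Iff (SNeg (SNeg a)) a)"
| N2:  "provable (Iff (SNeg (Conj a b)) (Disj (SNeg a) (SNeg b)))"
| N3:  "provable (Iff (SNeg (Disj a b)) (Conj (SNeg a) (SNeg b)))"
| N4:  "provable (Iff (SNeg (Imp a b)) (Conj a (SNeg b)))"
| A1:  "provable (SIff (Conj (Cond a b) (Cond a c)) (Cond a (Conj b c)))"
| A2:  "provable (Imp (Conj (SNeg (Cond a b)) (Cond a c)) (SNeg (Cond a (Disj b (SNeg c)))))"
| A3:  "provable (Imp (Imp (Dia a b) (Cond a c)) (Cond a (Imp b c)))"
| A4:  "provable (Cond a (Imp b b))"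
| MP:  "provable (Imp a b) \<Longrightarrow> provable a \<Longrightarrow> provable b"
| RA:  "provable (SIff a b) \<Longrightarrow> provable (SIff (Cond a c) (Cond b c))"
| RC:  "provable (Iff a b) \<Longrightarrow> provable (Iff (Cond c a) (Cond c b))"
| RCN: "provable (Iff (SNeg a) (SNeg b)) \<Longrightarrow> provable (Iff (SNeg (Cond c a)) (SNeg (Cond c b)))"

inductive derivable :: "fm set \<Rightarrow> fm \<Rightarrow> bool" for \<Gamma> where
  dthm: "provable a \<Longrightarrow> derivable \<Gamma> a"
| dprem: "a \<in> \<Gamma> \<Longrightarrow> derivable \<Gamma> a"
| dmp: "derivable \<Gamma> (Imp a b) \<Longrightarrow> derivable \<Gamma> a \<Longrightarrow> derivable \<Gamma> b"

fun bigDisj :: "fm list \<Rightarrow> fm" where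
  "bigDisj [] = Var 0"  (* never used: only nonempty lists are considered *)
| "bigDisj [a] = a"
| "bigDisj (a # b # xs) = Disj a (bigDisj (b # xs))"

definition entails :: "fm set \<Rightarrow> fm set \<Rightarrow> bool" where
  "entails \<Gamma> \<Delta> \<longleftrightarrow> (\<exists>xs. xs \<noteq> [] \<and> set xs \<subseteq> \<Delta> \<and> derivable \<Gamma> (bigDisj xs))"

definition maximal :: "fm set \<times> fm set \<Rightarrow> bool" where
  "maximal p \<longleftrightarrow> \<not> entails (fst p) (snd p) \<and> fst p \<union> snd p = UNIV"

definition nelson_model ::
  "'w set \<Rightarrow> ('w \<Rightarrow> 'w \<Rightarrow> bool) \<Rightarrow> ('w \<Rightarrow> 'w set \<times> 'w set \<Rightarrow> 'w \<Rightarrow> bool)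
   \<Rightarrow> (nat \<Rightarrow> 'w set) \<Rightarrow> (nat \<Rightarrow> 'w set) \<Rightarrow> bool" where
  "nelson_model W le R Vp Vm \<longleftrightarrow>
     W \<noteq> {} \<and>
     (\<forall>w\<in>W. le w w) \<and>
     (\<forall>u\<in>W. \<forall>v\<in>W. \<forall>w\<in>W. le u v \<longrightarrow> le v w \<longrightarrow> le u w) \<and>
     (\<forall>p. Vp p \<subseteq> W \<and> (\<forall>w\<in>Vp p. \<forall>v\<in>W. le w v \<longrightarrow> v \<in> Vp p)) \<and>
     (\<forall>p. Vm p \<subseteq> W \<and> (\<forall>w\<in>Vm p. \<forall>v\<in>W. le w v \<longrightarrow> v \<in> Vm p)) \<and>
     (\<forall>w XY v. R w XY v \<longrightarrow> w \<in> W \<and> v \<in> W \<and> fst XY \<subseteq> W \<and> snd XY \<subseteq> W) \<and>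
     (\<forall>X Y. \<forall>w\<in>W. \<forall>w'\<in>W. \<forall>v\<in>W. le w w' \<and> R w (X, Y) v \<longrightarrow>
          (\<exists>v'\<in>W. le v v' \<and> R w' (X, Y) v')) \<and>
     (\<forall>X Y. \<forall>w\<in>W. \<forall>v\<in>W. \<forall>v'\<in>W. R w (X, Y) v \<and> le v v' \<longrightarrow>
          (\<exists>w'\<in>W. le w w' \<and> R w' (X, Y) v'))"

definition Wc :: "(fm set \<times> fm set) set" where
  "Wc = {p. maximal p}"

definition leq_c :: "fm set \<times> fm set \<Rightarrow> fm set \<times> fm set \<Rightarrow> bool" where
  "leq_c p q \<longleftrightarrow> fst p \<subseteq> fst q"

definition ext_pos :: "fm \<Rightarrow> (fm set \<times> fm set) set" where
  "ext_pos a = {p \<in> Wc. a \<in> fst p}"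

definition ext_neg :: "fm \<Rightarrow> (fm set \<times> fm set) set" where
  "ext_neg a = {p \<in> Wc. SNeg a \<in> fst p}"

definition cond_c :: "fm \<Rightarrow> fm set \<times> fm set \<Rightarrow> fm set \<times> fm set \<Rightarrow> bool" where
  "cond_c a p q \<longleftrightarrow>
     {b. Cond a b \<in> fst p} \<subseteq> fst q \<and>
     {SNeg (Cond a b) | b. SNeg b \<in> fst q} \<subseteq> fst p"

definition R_c :: "fm set \<times> fm set \<Rightarrow> (fm set \<times> fm set) set \<times> (fm set \<times> fm set) set
                    \<Rightarrow> fm set \<times> fm set \<Rightarrow> bool" where
  "R_c p XY q \<longleftrightarrow> p \<in> Wc \<and> q \<in> Wc \<and>
     (\<exists>a. fst XY = ext_pos a \<and> snd XY = ext_neg a \<and> cond_c a p q)"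

definition Vp_c :: "nat \<Rightarrow> (fm set \<times> fm set) set" where
  "Vp_c n = {p \<in> Wc. Var n \<in> fst p}"

definition Vm_c :: "nat \<Rightarrow> (fm set \<times> fm set) set" where
  "Vm_c n = {p \<in> Wc. SNeg (Var n) \<in> fst p}"

end

theory Submission
  imports Defs
begin

(*
  Every world that the theorem asks for is produced by the Lindenbaum lemma: a bi-set (G, D)
  with G not entailing D extends to a maximal bi-set (H, -H) with G <= H and D disjoint from H.
  The work lies in showing that the relevant bi-sets do not entail.

  For (c1), given R_a(p, q) and p <= p', extend q + {b | a []-> b in p'} away from
  {~b | ~(a []-> b) notin p'}. By A1 and A4 the first set is closed under conjunction and
  nonempty, and the second is closed under disjunction up to provable implication, so an
  entailment would yield q |- b -> ~c with a []-> b in p' and ~(a []-> c) notin p'.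
  Then a <>-> (b -> ~c) lies in p, hence in p', and A2 forces ~(a []-> c) into p'.

  For (c2), given R_a(p, q) and q <= q', extend p + {~(a []-> b) | ~b in q'} away from
  {a []-> c | c notin q'}. By A3 a hypothesis ~(a []-> b) can be traded for weakening the
  consequent to ~b -> d, so an entailment would yield a []-> d in p with q', d |- c;
  then d is in q <= q', hence c is in q'.

  Formulas with the same positive and negative extensions are strongly equivalent (Lindenbaum
  again), so rule RA makes R_c independent of the representative; W_c is nonempty because
  N4CK is consistent.
*)

section \<open>Derivations\<close>

lemma provable_imp_refl: "provable (Imp a a)"
  by (rule MP[OF MP[OF S K] K])

lemma provable_Conj_iff: "provable (Conj a b) \<longleftrightarrow> provable a \<and> provable b"
  using MP CE1 CE2 CI by blast

lemma provable_Iff_iff: "provable (Iff a b) \<longleftrightarrow> provable (Imp a b) \<and> provable (Imp b a)"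
  by (simp add: Iff_def provable_Conj_iff)

lemma provable_SIff_iff:
  "provable (SIff a b) \<longleftrightarrow>
     provable (Imp a b) \<and> provable (Imp b a) \<and>
     provable (Imp (SNeg a) (SNeg b)) \<and> provable (Imp (SNeg b) (SNeg a))"
  by (auto simp: SIff_def SImp_def provable_Conj_iff)

lemma provable_IffD:
  assumes "provable (Iff a b)"
  shows "provable (Imp a b)" "provable (Imp b a)"
  using assms by (simp_all add: provable_Iff_iff)

lemma derivable_mono: "derivable G a \<Longrightarrow> G \<subseteq> H \<Longrightarrow> derivable H a"
  by (induction rule: derivable.induct) (auto intro: derivable.intros)

lemma derivable_empty_iff: "derivable {} a \<longleftrightarrow> provable a"
proof
  show "derivable {} a \<Longrightarrow> provable a"
    by (induction rule: derivable.induct) (auto intro: MP)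
qed (rule dthm)

lemma deduction_theorem: "derivable G (Imp a b) \<longleftrightarrow> derivable (insert a G) b"
proof
  assume "derivable G (Imp a b)"
  then show "derivable (insert a G) b"
    by (meson derivable_mono dmp dprem insertI1 subset_insertI)
next
  assume "derivable (insert a G) b"
  then show "derivable G (Imp a b)"
  proof (induction rule: derivable.induct)
    case (dthm b)
    then show ?case using dmp[OF derivable.dthm[OF K]] derivable.dthm by blast
  next
    case (dprem b)
    then show ?case
      using dmp[OF derivable.dthm[OF K]] derivable.dprem derivable.dthm[OF provable_imp_refl]
      by blast
  next
    case (dmp b c)
    then show ?case using derivable.dmp[OF derivable.dmp[OF derivable.dthm[OF S]]] by blast
  qed
qed

lemma derivable_cut: "derivable (insert a G) b \<Longrightarrow> derivable G a \<Longrightarrow> derivable G b"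
  using deduction_theorem dmp by blast

lemma derivable_by_provable_imp: "provable (Imp a b) \<Longrightarrow> derivable G a \<Longrightarrow> derivable G b"
  using dmp dthm by blast

lemma provable_imp_if_derivable: "derivable {a} b \<Longrightarrow> provable (Imp a b)"
  using deduction_theorem derivable_empty_iff by blast

lemma derivable_ConjI: "derivable G a \<Longrightarrow> derivable G b \<Longrightarrow> derivable G (Conj a b)"
  using dmp[OF dmp[OF dthm[OF CI]]] by blast

lemma derivable_ConjD:
  assumes "derivable G (Conj a b)"
  shows "derivable G a" "derivable G b"
  using assms derivable_by_provable_imp CE1 CE2 by blast+

lemma derivable_Imp_Conj:
  assumes "derivable G (Imp a (Imp b c))"
  shows "derivable G (Imp (Conj a b) c)"
proof -
  let ?G = "insert (Conj a b) G"
  have ab: "derivable ?G (Conj a b)" by (rule dprem) simp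
  have "derivable ?G (Imp a (Imp b c))" using assms by (rule derivable_mono) blast
  then have "derivable ?G c" using derivable_ConjD[OF ab] dmp by blast
  then show ?thesis by (simp add: deduction_theorem)
qed

lemma derivable_imp_trans:
  assumes "derivable G (Imp a b)" and "derivable G (Imp b c)"
  shows "derivable G (Imp a c)"
proof -
  have "derivable (insert a G) b" using assms(1) by (simp add: deduction_theorem)
  moreover have "derivable (insert a G) (Imp b c)"
    using assms(2) by (rule derivable_mono) blast
  ultimately show ?thesis by (simp add: deduction_theorem dmp)
qed

lemma provable_imp_trans: "provable (Imp a b) \<Longrightarrow> provable (Imp b c) \<Longrightarrow> provable (Imp a c)"
  using derivable_imp_trans derivable_empty_iff by blast

lemma provable_Disj_imp: "provable (Imp a c) \<Longrightarrow> provable (Imp b c) \<Longrightarrow> provable (Imp (Disj a b) c)"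
  using MP DE by blast

lemma derivable_compact: "derivable G a \<Longrightarrow> \<exists>F. finite F \<and> F \<subseteq> G \<and> derivable F a"
proof (induction rule: derivable.induct)
  case (dthm a)
  then show ?case using derivable.dthm by blast
next
  case (dprem a)
  then show ?case using derivable.dprem[of a "{a}"] by blast
next
  case (dmp a b)
  then obtain F1 F2 where "finite F1" "F1 \<subseteq> G" "derivable F1 (Imp a b)"
    "finite F2" "F2 \<subseteq> G" "derivable F2 a" by blast
  then show ?case
    using derivable.dmp[of "F1 \<union> F2" a b] derivable_mono[of _ _ "F1 \<union> F2"]
    by (metis Un_least finite_UnI sup_ge1 sup_ge2)
qed

lemma derivable_compact_Un:
  assumes "derivable (G \<union> S) a"
  obtains F where "finite F" "F \<subseteq> S" "derivable (G \<union> F) a"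
proof -
  obtain F0 where F0: "finite F0" "F0 \<subseteq> G \<union> S" "derivable F0 a"
    using derivable_compact[OF assms] by blast
  have "derivable (G \<union> (F0 \<inter> S)) a"
    using F0(3) by (rule derivable_mono) (use F0(2) in blast)
  with F0(1) show thesis by (intro that[of "F0 \<inter> S"]) auto
qed

lemma derivable_Un_Conj_closed:
  assumes "derivable (G \<union> S) c" and "s \<in> S" and "\<And>x y. x \<in> S \<Longrightarrow> y \<in> S \<Longrightarrow> Conj x y \<in> S"
  shows "\<exists>x\<in>S. derivable G (Imp x c)"
proof -
  have "\<exists>x\<in>S. derivable G (Imp x c)" if "finite F" "F \<subseteq> S" "derivable (G \<union> F) c" for F c
    using that
  proof (induction F arbitrary: c rule: finite_induct)
    case empty
    then have "derivable G (Imp s c)" using dmp[OF dthm[OF K]] by simp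
    with assms(2) show ?case by blast
  next
    case (insert y F)
    then have "derivable (G \<union> F) (Imp y c)" by (simp add: deduction_theorem)
    with insert obtain x where "x \<in> S" "derivable G (Imp x (Imp y c))" by auto
    with insert.prems(1) assms(3) show ?case by (blast intro: derivable_Imp_Conj)
  qed
  with assms(1) show ?thesis by (blast elim: derivable_compact_Un)
qed

section \<open>Entailment and the Lindenbaum lemma\<close>

lemma bigDisj_closed:
  "xs \<noteq> [] \<Longrightarrow> (\<And>x. x \<in> set xs \<Longrightarrow> Q x) \<Longrightarrow> (\<And>a b. Q a \<Longrightarrow> Q b \<Longrightarrow> Q (Disj a b))
   \<Longrightarrow> Q (bigDisj xs)"
  by (induction xs rule: bigDisj.induct) auto

lemma provable_imp_bigDisj: "x \<in> set xs \<Longrightarrow> provable (Imp x (bigDisj xs))"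
proof (induction xs rule: bigDisj.induct)
  case (3 a b xs)
  show ?case
  proof (cases "x = a")
    case False
    then have "provable (Imp x (bigDisj (b # xs)))" using 3 by simp
    then show ?thesis using provable_imp_trans[OF _ DI2] by simp
  qed (simp add: DI1)
qed (simp_all add: provable_imp_refl)

lemma provable_bigDisj_subset:
  "xs \<noteq> [] \<Longrightarrow> set xs \<subseteq> set ys \<Longrightarrow> provable (Imp (bigDisj xs) (bigDisj ys))"
  by (rule bigDisj_closed[where Q = "\<lambda>c. provable (Imp c (bigDisj ys))"])
    (auto intro: provable_imp_bigDisj provable_Disj_imp)

lemma entails_if_derivable: "derivable G d \<Longrightarrow> d \<in> D \<Longrightarrow> entails G D"
  unfolding entails_def by (intro exI[of _ "[d]"]) simp

lemma entails_mono: "entails G D \<Longrightarrow> G \<subseteq> H \<Longrightarrow> entails H D"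
  unfolding entails_def using derivable_mono by blast

lemma entails_compact:
  assumes "entails G D"
  obtains F where "finite F" "F \<subseteq> G" "entails F D"
proof -
  obtain xs where xs: "xs \<noteq> []" "set xs \<subseteq> D" "derivable G (bigDisj xs)"
    using assms unfolding entails_def by blast
  with derivable_compact[OF xs(3)] show thesis
    using that unfolding entails_def by blast
qed

lemma entails_cut: "entails (insert a G) D \<Longrightarrow> derivable G a \<Longrightarrow> entails G D"
  unfolding entails_def using derivable_cut by blast

lemma entails_insert_Disj:
  assumes "entails (insert a G) D" and "entails (insert b G) D"
  shows "entails (insert (Disj a b) G) D"
proof -
  obtain ds es where ds: "ds \<noteq> []" "set ds \<subseteq> D" "derivable G (Imp a (bigDisj ds))"
    and es: "es \<noteq> []" "set es \<subseteq> D" "derivable G (Imp b (bigDisj es))"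
    using assms unfolding entails_def deduction_theorem by blast
  have "derivable G (Imp a (bigDisj (ds @ es)))"
    using ds(3) provable_bigDisj_subset[OF ds(1), of "ds @ es"]
    by (simp add: deduction_theorem derivable_by_provable_imp)
  moreover have "derivable G (Imp b (bigDisj (ds @ es)))"
    using es(3) provable_bigDisj_subset[OF es(1), of "ds @ es"]
    by (simp add: deduction_theorem derivable_by_provable_imp)
  ultimately have "derivable G (Imp (Disj a b) (bigDisj (ds @ es)))"
    by (rule dmp[OF dmp[OF dthm[OF DE]]])
  then show ?thesis
    unfolding entails_def deduction_theorem using ds es by (intro exI[of _ "ds @ es"]) auto
qed

lemma entails_Disj_closed:
  assumes "entails G D" and "\<And>d e. d \<in> D \<Longrightarrow> e \<in> D \<Longrightarrow> \<exists>f\<in>D. provable (Imp (Disj d e) f)"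
  shows "\<exists>d\<in>D. derivable G d"
proof -
  obtain xs where xs: "xs \<noteq> []" "set xs \<subseteq> D" "derivable G (bigDisj xs)"
    using assms(1) unfolding entails_def by blast
  have "\<exists>d\<in>D. provable (Imp (bigDisj xs) d)"
  proof (rule bigDisj_closed[OF xs(1)])
    show "\<exists>d\<in>D. provable (Imp x d)" if "x \<in> set xs" for x
      using that xs(2) provable_imp_refl by blast
    show "\<exists>f\<in>D. provable (Imp (Disj a b) f)"
      if ab: "\<exists>d\<in>D. provable (Imp a d)" "\<exists>e\<in>D. provable (Imp b e)" for a b
    proof -
      obtain d e f where "d \<in> D" "e \<in> D" "f \<in> D" "provable (Imp a d)" "provable (Imp b e)"
        "provable (Imp (Disj d e) f)"
        using ab assms(2) by meson
      then show ?thesis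
        using DI1 DI2 provable_Disj_imp provable_imp_trans by meson
    qed
  qed
  then show ?thesis using xs(3) derivable_by_provable_imp by blast
qed

lemma entails_singleton_iff: "entails G {b} \<longleftrightarrow> derivable G b"
proof
  have "provable (Imp (Disj b b) b)"
    by (rule provable_Disj_imp) (rule provable_imp_refl)+
  then show "entails G {b} \<Longrightarrow> derivable G b"
    using entails_Disj_closed[of G "{b}"] by blast
qed (simp add: entails_if_derivable)

lemma lindenbaum:
  assumes "\<not> entails G D"
  obtains H where "G \<subseteq> H" "D \<inter> H = {}" "maximal (H, - H)"
proof -
  let ?A = "{S. G \<subseteq> S \<and> \<not> entails S D}"
  have "\<exists>M\<in>?A. \<forall>X\<in>?A. M \<subseteq> X \<longrightarrow> X = M"
  proof (rule subset_Zorn_nonempty)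
    show "?A \<noteq> {}" using assms by blast
    fix C assume C: "C \<noteq> {}" "subset.chain ?A C"
    then have C_A: "C \<subseteq> ?A" by (simp add: subset_chain_def)
    show "\<Union>C \<in> ?A"
    proof (intro CollectI conjI notI)
      obtain X where "X \<in> C" using C(1) by blast
      with C_A show "G \<subseteq> \<Union>C" by blast
      assume "entails (\<Union>C) D"
      then obtain F where "finite F" "F \<subseteq> \<Union>C" "entails F D"
        by (rule entails_compact)
      moreover obtain B where "B \<in> C" "F \<subseteq> B"
        using finite_subset_Union_chain[OF \<open>finite F\<close> \<open>F \<subseteq> \<Union>C\<close> C] .
      ultimately show False
        using C_A entails_mono by blast
    qed
  qed
  then obtain M where M_A: "M \<in> ?A" and M_max: "\<forall>X\<in>?A. M \<subseteq> X \<longrightarrow> X = M" ..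
  then have M: "G \<subseteq> M" "\<not> entails M D" by simp_all
  have saturated: "entails (insert x M) D" if "x \<notin> M" for x
  proof (rule ccontr)
    assume "\<not> entails (insert x M) D"
    with M(1) have "insert x M \<in> ?A" by blast
    with M_max have "insert x M = M" by blast
    with that show False by blast
  qed
  have "maximal (M, - M)"
    unfolding maximal_def fst_conv snd_conv
  proof (intro conjI notI)
    assume "entails M (- M)"
    then obtain xs where xs: "xs \<noteq> []" "set xs \<subseteq> - M" "derivable M (bigDisj xs)"
      unfolding entails_def by blast
    have "entails (insert (bigDisj xs) M) D"
      using xs(1) by (rule bigDisj_closed) (use xs(2) saturated entails_insert_Disj in auto)
    then show False using entails_cut xs(3) M(2) by blast
  qed simp
  moreover have "D \<inter> M = {}"
  proof (rule ccontr)
    assume "D \<inter> M \<noteq> {}"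
    then obtain d where "d \<in> M" "d \<in> D" by blast
    then have "entails M D" by (intro entails_if_derivable dprem)
    with M(2) show False ..
  qed
  ultimately show thesis by (intro that[OF M(1)])
qed

section \<open>Maximal bi-sets\<close>

lemma mem_Wc [simp]: "p \<in> Wc \<longleftrightarrow> maximal p"
  by (simp add: Wc_def)

lemma maximal_mem_snd: "maximal p \<Longrightarrow> a \<notin> fst p \<Longrightarrow> a \<in> snd p"
  unfolding maximal_def by (metis UNIV_I Un_iff)

lemma maximal_derivable_mem: "maximal p \<Longrightarrow> derivable (fst p) a \<Longrightarrow> a \<in> fst p"
  using maximal_mem_snd entails_if_derivable unfolding maximal_def by blast

lemma maximal_Disj_mem:
  assumes "maximal p" and "Disj a b \<in> fst p"
  shows "a \<in> fst p \<or> b \<in> fst p"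
proof (rule ccontr)
  assume "\<not> (a \<in> fst p \<or> b \<in> fst p)"
  then have "set [a, b] \<subseteq> snd p" using maximal_mem_snd[OF assms(1)] by simp
  moreover have "derivable (fst p) (bigDisj [a, b])" using assms(2) by (simp add: dprem)
  ultimately have "entails (fst p) (snd p)" unfolding entails_def by blast
  then show False using assms(1) unfolding maximal_def by blast
qed

lemma maximal_provable_imp_mem:
  "maximal p \<Longrightarrow> provable (Imp a b) \<Longrightarrow> a \<in> fst p \<Longrightarrow> b \<in> fst p"
  using maximal_derivable_mem derivable_by_provable_imp dprem by blast

lemma maximal_provable_mem: "maximal p \<Longrightarrow> provable a \<Longrightarrow> a \<in> fst p"
  using maximal_derivable_mem dthm by blast

lemma maximal_Conj_mem: "maximal p \<Longrightarrow> a \<in> fst p \<Longrightarrow> b \<in> fst p \<Longrightarrow> Conj a b \<in> fst p"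
  using maximal_derivable_mem derivable_ConjI dprem by blast

lemma provable_imp_if_maximal_mem:
  assumes "\<And>p. maximal p \<Longrightarrow> a \<in> fst p \<Longrightarrow> b \<in> fst p"
  shows "provable (Imp a b)"
proof (rule ccontr)
  assume "\<not> provable (Imp a b)"
  then have "\<not> entails {a} {b}"
    by (auto simp: entails_singleton_iff dest: provable_imp_if_derivable)
  then obtain H where "a \<in> H" "b \<notin> H" "maximal (H, - H)"
    by (rule lindenbaum) auto
  then show False using assms[of "(H, - H)"] by simp
qed

section \<open>Theorems about the conditional\<close>

lemma provable_A1:
  "provable (Imp (Cond c (Conj a b)) (Conj (Cond c a) (Cond c b)))"
  "provable (Imp (Conj (Cond c a) (Cond c b)) (Cond c (Conj a b)))"
  "provable (Imp (SNeg (Conj (Cond c a) (Cond c b))) (SNeg (Cond c (Conj a b))))"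
  "provable (Imp (SNeg (Cond c (Conj a b))) (SNeg (Conj (Cond c a) (Cond c b))))"
  using A1[of c a b] by (simp_all add: provable_SIff_iff)

lemma provable_Cond_mono:
  assumes "provable (Imp a b)"
  shows "provable (Imp (Cond c a) (Cond c b))"
proof -
  have a: "derivable {a} a" by (rule dprem) simp
  then have "derivable {a} (Conj a b)"
    using derivable_by_provable_imp[OF assms a] by (rule derivable_ConjI)
  then have "provable (Iff a (Conj a b))"
    by (simp add: provable_Iff_iff CE1 provable_imp_if_derivable)
  then have "provable (Imp (Cond c a) (Cond c (Conj a b)))" by (intro provable_IffD RC)
  moreover have "provable (Imp (Cond c (Conj a b)) (Cond c b))"
    using provable_A1(1) CE2 by (rule provable_imp_trans)
  ultimately show ?thesis by (rule provable_imp_trans)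
qed

lemma provable_SNeg_Cond_mono:
  assumes "provable (Imp (SNeg a) (SNeg b))"
  shows "provable (Imp (SNeg (Cond c a)) (SNeg (Cond c b)))"
proof -
  have "provable (Imp (SNeg (Conj a b)) (SNeg b))"
    using provable_IffD(1)[OF N2] provable_Disj_imp[OF assms provable_imp_refl]
    by (rule provable_imp_trans)
  moreover have "provable (Imp (SNeg b) (SNeg (Conj a b)))"
    using DI2 provable_IffD(2)[OF N2] by (rule provable_imp_trans)
  ultimately have "provable (Iff (SNeg (Conj a b)) (SNeg b))" by (simp add: provable_Iff_iff)
  then have "provable (Imp (SNeg (Cond c (Conj a b))) (SNeg (Cond c b)))"
    by (intro provable_IffD RCN)
  moreover have "provable (Imp (SNeg (Cond c a)) (SNeg (Cond c (Conj a b))))"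
    using provable_imp_trans[OF DI1 provable_IffD(2)[OF N2]] provable_A1(3)
    by (rule provable_imp_trans)
  ultimately show ?thesis by (rule provable_imp_trans[rotated])
qed

lemma provable_Dia_Imp_Cond:
  "provable (Imp (Conj (Dia a (Imp b (SNeg c))) (Cond a b)) (SNeg (Cond a c)))"
proof -
  let ?d = "Disj (SNeg (Imp b (SNeg c))) (SNeg b)"
  have "derivable {SNeg ?d} (Conj (SNeg (SNeg (Imp b (SNeg c)))) (SNeg (SNeg b)))"
    using provable_IffD(1)[OF N3] by (rule derivable_by_provable_imp) (simp add: dprem)
  then have "derivable {SNeg ?d} (Imp b (SNeg c))" "derivable {SNeg ?d} b"
    using derivable_ConjD provable_IffD(1)[OF N1] derivable_by_provable_imp by blast+
  then have "provable (Imp (SNeg ?d) (SNeg c))"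
    using dmp provable_imp_if_derivable by blast
  then have "provable (Imp (SNeg (Cond a ?d)) (SNeg (Cond a c)))"
    by (rule provable_SNeg_Cond_mono)
  with A2[of a "SNeg (Imp b (SNeg c))" b] show ?thesis
    unfolding Dia_def by (rule provable_imp_trans)
qed

lemma derivable_Cond_Imp_SNeg:
  assumes "derivable G (Imp (SNeg (Cond a b)) (Cond a c))"
  shows "derivable G (Cond a (Imp (SNeg b) c))"
proof -
  have "provable (Imp (Dia a (SNeg b)) (SNeg (Cond a b)))"
    unfolding Dia_def using provable_IffD(1)[OF N1] by (rule provable_SNeg_Cond_mono)
  from dthm[OF this] assms have "derivable G (Imp (Dia a (SNeg b)) (Cond a c))"
    by (rule derivable_imp_trans)
  then show ?thesis by (rule dmp[OF dthm[OF A3]])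
qed

lemma derivable_Cond_from_SNeg_Conds:
  assumes "derivable (G \<union> {SNeg (Cond a b) | b. SNeg b \<in> Q}) (Cond a c)"
  shows "\<exists>d. derivable G (Cond a d) \<and> derivable (insert d Q) c"
proof -
  have "\<exists>d. derivable G (Cond a d) \<and> derivable (insert d Q) c"
    if "finite F" "F \<subseteq> {SNeg (Cond a b) | b. SNeg b \<in> Q}" "derivable (G \<union> F) (Cond a c)" for F G
    using that
  proof (induction F arbitrary: G rule: finite_induct)
    case empty
    moreover have "derivable (insert c Q) c" by (rule dprem) simp
    ultimately show ?case by auto
  next
    case (insert x F)
    obtain b where x: "x = SNeg (Cond a b)" "SNeg b \<in> Q" using insert.prems(1) by auto
    have "derivable (insert x G \<union> F) (Cond a c)" using insert.prems(2) by simp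
    then obtain d where d: "derivable (insert x G) (Cond a d)" "derivable (insert d Q) c"
      using insert.IH insert.prems(1) by blast
    from d(1) have "derivable G (Cond a (Imp (SNeg b) d))"
      by (simp add: x deduction_theorem[symmetric] derivable_Cond_Imp_SNeg)
    moreover have "derivable (insert (Imp (SNeg b) d) Q) c"
    proof -
      let ?Q = "insert (Imp (SNeg b) d) Q"
      have "derivable ?Q (Imp (SNeg b) d)" "derivable ?Q (SNeg b)"
        using x(2) by (auto intro: dprem)
      then have "derivable ?Q d" by (rule dmp)
      moreover have "derivable (insert d ?Q) c" using d(2) by (rule derivable_mono) blast
      ultimately show ?thesis by (rule derivable_cut[rotated])
    qed
    ultimately show ?case by blast
  qed
  with assms show ?thesis by (blast elim: derivable_compact_Un)
qed

lemma maximal_SNeg_Cond_Conj_mem: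
  assumes "maximal p" and "SNeg (Cond a (Conj b c)) \<in> fst p"
  shows "SNeg (Cond a b) \<in> fst p \<or> SNeg (Cond a c) \<in> fst p"
proof -
  have "provable (Imp (SNeg (Cond a (Conj b c))) (Disj (SNeg (Cond a b)) (SNeg (Cond a c))))"
    using provable_A1(4) provable_IffD(1)[OF N2] by (rule provable_imp_trans)
  from maximal_provable_imp_mem[OF assms(1) this assms(2)] show ?thesis
    by (rule maximal_Disj_mem[OF assms(1)])
qed

section \<open>The canonical model\<close>

lemma provable_SIff_if_ext_eq:
  assumes "ext_pos a = ext_pos b" and "ext_neg a = ext_neg b"
  shows "provable (SIff a b)"
proof -
  have "a \<in> fst p \<longleftrightarrow> b \<in> fst p" "SNeg a \<in> fst p \<longleftrightarrow> SNeg b \<in> fst p" if "maximal p" for p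
    using arg_cong[OF assms(1), of "\<lambda>X. p \<in> X"] arg_cong[OF assms(2), of "\<lambda>X. p \<in> X"] that
    by (simp_all add: ext_pos_def ext_neg_def)
  then show ?thesis
    unfolding provable_SIff_iff by (blast intro: provable_imp_if_maximal_mem)
qed

lemma cond_c_iff:
  "cond_c a p q \<longleftrightarrow>
     (\<forall>b. Cond a b \<in> fst p \<longrightarrow> b \<in> fst q) \<and> (\<forall>b. SNeg b \<in> fst q \<longrightarrow> SNeg (Cond a b) \<in> fst p)"
  by (auto simp: cond_c_def)

lemma cond_c_cong:
  assumes "provable (SIff a b)" and "maximal p"
  shows "cond_c a p q \<longleftrightarrow> cond_c b p q"
proof -
  have "provable (SIff (Cond a c) (Cond b c))" for c using assms(1) by (rule RA)
  then have "Cond a c \<in> fst p \<longleftrightarrow> Cond b c \<in> fst p"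
    "SNeg (Cond a c) \<in> fst p \<longleftrightarrow> SNeg (Cond b c) \<in> fst p" for c
    unfolding provable_SIff_iff using maximal_provable_imp_mem[OF assms(2)] by blast+
  then show ?thesis unfolding cond_c_iff by simp
qed

lemma cond_c_extend_world:
  assumes p': "maximal p'" and q: "maximal q" and le: "fst p \<subseteq> fst p'" and R: "cond_c a p q"
  shows "\<exists>q'\<in>Wc. fst q \<subseteq> fst q' \<and> cond_c a p' q'"
proof -
  let ?S = "{b. Cond a b \<in> fst p'}"
  let ?D = "{SNeg b | b. SNeg (Cond a b) \<notin> fst p'}"
  have "\<not> entails (fst q \<union> ?S) ?D"
  proof
    assume "entails (fst q \<union> ?S) ?D"
    moreover have "\<exists>f\<in>?D. provable (Imp (Disj d e) f)" if de: "d \<in> ?D" "e \<in> ?D" for d e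
    proof -
      obtain b c where bc: "d = SNeg b" "e = SNeg c"
        "SNeg (Cond a b) \<notin> fst p'" "SNeg (Cond a c) \<notin> fst p'"
        using de by blast
      then have "SNeg (Conj b c) \<in> ?D" using maximal_SNeg_Cond_Conj_mem[OF p'] by blast
      moreover have "provable (Imp (Disj d e) (SNeg (Conj b c)))"
        using provable_IffD(2)[OF N2] by (simp add: bc(1,2))
      ultimately show ?thesis ..
    qed
    ultimately have "\<exists>d\<in>?D. derivable (fst q \<union> ?S) d" by (rule entails_Disj_closed)
    then obtain c where c: "SNeg (Cond a c) \<notin> fst p'" "derivable (fst q \<union> ?S) (SNeg c)"
      by blast
    have "Imp (Var 0) (Var 0) \<in> ?S" using maximal_provable_mem[OF p' A4] by simp
    moreover have "Conj x y \<in> ?S" if "x \<in> ?S" "y \<in> ?S" for x y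
      using that maximal_Conj_mem[OF p'] maximal_provable_imp_mem[OF p' provable_A1(2)] by simp
    ultimately obtain b where b: "Cond a b \<in> fst p'" "derivable (fst q) (Imp b (SNeg c))"
      using derivable_Un_Conj_closed[OF c(2)] by blast
    from b(2) have "Imp b (SNeg c) \<in> fst q" by (rule maximal_derivable_mem[OF q])
    then have "SNeg (SNeg (Imp b (SNeg c))) \<in> fst q"
      by (rule maximal_provable_imp_mem[OF q provable_IffD(2)[OF N1]])
    then have "Dia a (Imp b (SNeg c)) \<in> fst p'"
      using R le unfolding cond_c_iff Dia_def by blast
    then have "Conj (Dia a (Imp b (SNeg c))) (Cond a b) \<in> fst p'"
      using b(1) by (rule maximal_Conj_mem[OF p'])
    then have "SNeg (Cond a c) \<in> fst p'"
      by (rule maximal_provable_imp_mem[OF p' provable_Dia_Imp_Cond])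
    with c(1) show False ..
  qed
  then obtain H where H: "fst q \<union> ?S \<subseteq> H" "?D \<inter> H = {}" "maximal (H, - H)"
    by (rule lindenbaum)
  then have "cond_c a p' (H, - H)" unfolding cond_c_iff by auto
  with H show ?thesis by auto
qed

lemma cond_c_extend_successor:
  assumes p: "maximal p" and q': "maximal q'" and le: "fst q \<subseteq> fst q'" and R: "cond_c a p q"
  shows "\<exists>p'\<in>Wc. fst p \<subseteq> fst p' \<and> cond_c a p' q'"
proof -
  let ?N = "{SNeg (Cond a b) | b. SNeg b \<in> fst q'}"
  let ?P = "{Cond a c | c. c \<notin> fst q'}"
  have "\<not> entails (fst p \<union> ?N) ?P"
  proof
    assume "entails (fst p \<union> ?N) ?P"
    moreover have "\<exists>f\<in>?P. provable (Imp (Disj d e) f)" if de: "d \<in> ?P" "e \<in> ?P" for d e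
    proof -
      obtain b c where bc: "d = Cond a b" "e = Cond a c" "b \<notin> fst q'" "c \<notin> fst q'"
        using de by blast
      then have "Cond a (Disj b c) \<in> ?P" using maximal_Disj_mem[OF q'] by blast
      moreover have "provable (Imp (Disj d e) (Cond a (Disj b c)))"
        unfolding bc(1,2) by (intro provable_Disj_imp provable_Cond_mono DI1 DI2)
      ultimately show ?thesis ..
    qed
    ultimately have "\<exists>d\<in>?P. derivable (fst p \<union> ?N) d" by (rule entails_Disj_closed)
    then obtain c where c: "c \<notin> fst q'" "derivable (fst p \<union> ?N) (Cond a c)"
      by blast
    then obtain d where d: "derivable (fst p) (Cond a d)" "derivable (insert d (fst q')) c"
      using derivable_Cond_from_SNeg_Conds by blast
    from d(1) have "Cond a d \<in> fst p" by (rule maximal_derivable_mem[OF p])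
    with R le have "d \<in> fst q'" unfolding cond_c_iff by blast
    then have "derivable (fst q') c" by (intro derivable_cut[OF d(2)] dprem)
    with c(1) show False using maximal_derivable_mem[OF q'] by blast
  qed
  then obtain H where H: "fst p \<union> ?N \<subseteq> H" "?P \<inter> H = {}" "maximal (H, - H)"
    by (rule lindenbaum)
  then have "cond_c a (H, - H) q'" unfolding cond_c_iff by auto
  with H show ?thesis by auto
qed

lemma R_c_extend_world:
  assumes "w' \<in> Wc" and "leq_c w w'" and "R_c w XY v"
  shows "\<exists>v'\<in>Wc. leq_c v v' \<and> R_c w' XY v'"
proof -
  obtain a where a: "fst XY = ext_pos a" "snd XY = ext_neg a" "cond_c a w v" and v: "v \<in> Wc"
    using assms(3) unfolding R_c_def by blast
  have "\<exists>v'\<in>Wc. fst v \<subseteq> fst v' \<and> cond_c a w' v'"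
    using assms(1) v assms(2) a(3) unfolding leq_c_def mem_Wc by (rule cond_c_extend_world)
  then obtain v' where "v' \<in> Wc" "fst v \<subseteq> fst v'" "cond_c a w' v'" by blast
  with a(1,2) assms(1) show ?thesis unfolding R_c_def leq_c_def by blast
qed

lemma R_c_extend_successor:
  assumes "v' \<in> Wc" and "leq_c v v'" and "R_c w XY v"
  shows "\<exists>w'\<in>Wc. leq_c w w' \<and> R_c w' XY v'"
proof -
  obtain a where a: "fst XY = ext_pos a" "snd XY = ext_neg a" "cond_c a w v" and w: "w \<in> Wc"
    using assms(3) unfolding R_c_def by blast
  have "\<exists>w'\<in>Wc. fst w \<subseteq> fst w' \<and> cond_c a w' v'"
    using w assms(1) assms(2) a(3) unfolding leq_c_def mem_Wc by (rule cond_c_extend_successor)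
  then obtain w' where "w' \<in> Wc" "fst w \<subseteq> fst w'" "cond_c a w' v'" by blast
  with a(1,2) assms(1) show ?thesis unfolding R_c_def leq_c_def by blast
qed

text \<open>Reading strong negation classically and every conditional as true validates N4CK,
  so the logic is consistent.\<close>
fun trivially_holds :: "fm \<Rightarrow> bool" where
  "trivially_holds (Var n) = False"
| "trivially_holds (Conj a b) = (trivially_holds a \<and> trivially_holds b)"
| "trivially_holds (Disj a b) = (trivially_holds a \<or> trivially_holds b)"
| "trivially_holds (Imp a b) = (trivially_holds a \<longrightarrow> trivially_holds b)"
| "trivially_holds (SNeg a) = (\<not> trivially_holds a)"
| "trivially_holds (Cond a b) = True"

lemma provable_trivially_holds: "provable a \<Longrightarrow> trivially_holds a"
  by (induction rule: provable.induct) (auto simp: Iff_def SImp_def SIff_def Dia_def)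

lemma Wc_nonempty: "Wc \<noteq> {}"
proof -
  have "\<not> entails {} {Var 0}"
    using provable_trivially_holds by (fastforce simp: entails_singleton_iff derivable_empty_iff)
  then obtain H where "maximal (H, - H)" by (rule lindenbaum)
  then show ?thesis by auto
qed

theorem lemma10:
  shows "(\<forall>a a'. ext_pos a = ext_pos a' \<and> ext_neg a = ext_neg a' \<longrightarrow>
            (\<forall>p\<in>Wc. \<forall>q\<in>Wc. cond_c a p q \<longleftrightarrow> cond_c a' p q))
         \<and> nelson_model Wc leq_c R_c Vp_c Vm_c"
proof (intro conjI)
  show "\<forall>a a'. ext_pos a = ext_pos a' \<and> ext_neg a = ext_neg a' \<longrightarrow>
            (\<forall>p\<in>Wc. \<forall>q\<in>Wc. cond_c a p q \<longleftrightarrow> cond_c a' p q)"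
    using cond_c_cong provable_SIff_if_ext_eq mem_Wc by meson
  show "nelson_model Wc leq_c R_c Vp_c Vm_c"
    unfolding nelson_model_def
  proof (intro conjI)
    show "Wc \<noteq> {}" by (rule Wc_nonempty)
    show "\<forall>X Y. \<forall>w\<in>Wc. \<forall>w'\<in>Wc. \<forall>v\<in>Wc. leq_c w w' \<and> R_c w (X, Y) v \<longrightarrow>
          (\<exists>v'\<in>Wc. leq_c v v' \<and> R_c w' (X, Y) v')"
      using R_c_extend_world by blast
    show "\<forall>X Y. \<forall>w\<in>Wc. \<forall>v\<in>Wc. \<forall>v'\<in>Wc. R_c w (X, Y) v \<and> leq_c v v' \<longrightarrow>
          (\<exists>w'\<in>Wc. leq_c w w' \<and> R_c w' (X, Y) v')"
      using R_c_extend_successor by blast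
  qed (unfold leq_c_def Vp_c_def Vm_c_def R_c_def ext_pos_def ext_neg_def, blast+)
qed

end
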